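(* Let $E$ be a set of finite measure and let $(F_n)\subset L^{3/2}(E,\mathbb{R}^3)$ be bounded. Assume that for some $F\in L^{3/2}(E,\mathbb{R}^3)$ and some $\theta>0$ one has $$\left(\left(|F_n|^{-1/2}F_n-|F|^{-1/2}F\right)\cdot(F_n-F)\right)^\theta\to0\quad\text{in }L^1(E).$$ Then $F_n\to F$ in $L^p(E,\mathbb{R}^3)$ for any $1\le p<3/2$.
   Context: $|v|^{-1/2}v$ is interpreted as $0$ where $v=0$. *)

theory Defs
  imports "HOL-Analysis.Analysis"
begin

definition halfweight :: "real ^ 3 \<Rightarrow> real ^ 3" where
  "halfweight v = (if v = 0 then 0 else (norm v powr (-1/2)) *\<^sub>R v)"

definition in_Lp_on :: "'a measure \<Rightarrow> 'a set \<Rightarrow> real \<Rightarrow> ('a \<Rightarrow> real ^ 3) \<Rightarrow> bool" where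
  "in_Lp_on M E p f \<longleftrightarrow> f \<in> borel_measurable M \<and> set_integrable M E (\<lambda>x. norm (f x) powr p)"

end

theory Submission
  imports Defs
begin

text \<open>Write D(a,b) for (|a|^(-1/2) a - |b|^(-1/2) b) \<bullet> (a - b). An elementary computation gives
  |a - b|^2 \<le> (\<surd>|a| + \<surd>|b|) D(a,b). So pointwise |a - b|^p is small where D(a,b) and |a|, |b| are
  bounded, is at most a multiple of D(a,b)^\<theta> where D(a,b) is large but |a|, |b| are bounded, and,
  because p < 3/2, is at most a small multiple of |a|^(3/2) + |b|^(3/2) where |a| or |b| is large.
  Integrating, for every \<eta> > 0 there is c with
  \<integral>|F_n - F|^p \<le> \<eta> (|E| + \<integral>|F_n|^(3/2) + \<integral>|F|^(3/2)) + c \<integral>D(F_n,F)^\<theta>,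
  and the last integral tends to 0.\<close>

(* Also at v = 0, where 1 / sqrt 0 = 0. *)
lemma halfweight_eq: "halfweight v = (1 / sqrt (norm v)) *\<^sub>R v"
  by (simp add: halfweight_def powr_minus_divide powr_half_sqrt)

lemma quartic_le_sum_mult_cubic:
  fixes x y c :: real
  assumes "x > 0" "y > 0" "c \<le> x^2 * y^2"
  shows "x^4 - 2*c + y^4 \<le> (x + y) * (x^3 - c/x - c/y + y^3)"
proof -
  have "(x + y) * (x^3 - c/x - c/y + y^3) - (x^4 - 2*c + y^4) = (x^2 + y^2) * (x^2 * y^2 - c) / (x * y)"
    using assms by (simp add: field_simps) (simp add: algebra_simps power2_eq_square power3_eq_cube power4_eq_xxxx)
  moreover have "(x^2 + y^2) * (x^2 * y^2 - c) / (x * y) \<ge> 0" using assms by simp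
  ultimately show ?thesis by linarith
qed

lemma norm_diff_square_le_sqrt_scaled_inner:
  fixes a b :: "'a::real_inner"
  shows "norm (a - b)^2 \<le> (sqrt (norm a) + sqrt (norm b))
           * inner ((1 / sqrt (norm a)) *\<^sub>R a - (1 / sqrt (norm b)) *\<^sub>R b) (a - b)"
proof (cases "a = 0 \<or> b = 0")
  case True
  then show ?thesis
    by (auto simp: power2_norm_eq_inner[symmetric] field_simps real_sqrt_mult[symmetric] power2_eq_square)
next
  case False
  define x where "x = sqrt (norm a)"
  define y where "y = sqrt (norm b)"
  define c where "c = inner a b"
  have x: "x > 0" "norm a = x^2" and y: "y > 0" "norm b = y^2"
    using False by (auto simp: x_def y_def)
  have c: "c \<le> x^2 * y^2" using norm_cauchy_schwarz[of a b] x y by (simp add: c_def)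
  have "inner ((1 / x) *\<^sub>R a - (1 / y) *\<^sub>R b) (a - b) = x^3 - c/x - c/y + y^3"
    using x y
    by (simp add: inner_diff_left inner_diff_right inner_commute[of b a] flip: c_def
          power2_norm_eq_inner) (simp add: field_simps eval_nat_numeral)
  moreover have "norm (a - b)^2 = x^4 - 2*c + y^4"
    using x y by (simp add: power2_norm_eq_inner inner_diff_left inner_diff_right inner_commute[of b a] c_def)
        (simp add: power2_norm_eq_inner[symmetric])
  ultimately show ?thesis
    using quartic_le_sum_mult_cubic[OF x(1) y(1) c] by (simp flip: x_def y_def)
qed

lemma inner_sqrt_scaled_diff_nonneg:
  fixes a b :: "'a::real_inner"
  shows "0 \<le> inner ((1 / sqrt (norm a)) *\<^sub>R a - (1 / sqrt (norm b)) *\<^sub>R b) (a - b)"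
proof (cases "a = 0 \<and> b = 0")
  case False
  then have "0 < sqrt (norm a) + sqrt (norm b)"
    by (auto intro: add_pos_nonneg add_nonneg_pos)
  moreover have "0 \<le> (sqrt (norm a) + sqrt (norm b))
      * inner ((1 / sqrt (norm a)) *\<^sub>R a - (1 / sqrt (norm b)) *\<^sub>R b) (a - b)"
    using norm_diff_square_le_sqrt_scaled_inner[of a b] zero_le_power2 order_trans by blast
  ultimately show ?thesis by (simp add: zero_le_mult_iff)
qed simp

lemma powr_eq_square_powr_half:
  fixes w p :: real
  assumes "0 \<le> w"
  shows "w powr p = (w^2) powr (p/2)"
proof (cases "w = 0")
  case False
  then have "w^2 = w powr 2" using assms by (simp add: powr_realpow)
  then show ?thesis by (simp add: powr_powr)
qed simp

lemma powr_le_split_by_size_and_defect: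
  fixes w R D p \<delta> K \<theta> :: real
  assumes p: "0 \<le> p" "p < 3/2" and pos: "0 < \<theta>" "0 < \<delta>" "0 < K"
    and nonneg: "0 \<le> w" "1 \<le> R" "0 \<le> D"
    and w_le: "w \<le> 2 * R" and w_square_le: "w^2 \<le> 2 * sqrt R * D"
  shows "w powr p \<le> ((2*\<delta>) powr (p/2) + 2 powr p * K powr (p - 3/2)) * R powr (3/2)
           + (2*K) powr p / \<delta> powr \<theta> * D powr \<theta>"
proof -
  have RK_nonneg: "0 \<le> 2 powr p * K powr (p - 3/2) * R powr (3/2)"
    and \<delta>_nonneg: "0 \<le> (2*\<delta>) powr (p/2) * R powr (3/2)"
    and D_nonneg: "0 \<le> (2*K) powr p / \<delta> powr \<theta> * D powr \<theta>"
    by simp_all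
  consider "D \<le> \<delta>" | "\<delta> < D" "R \<le> K" | "K < R" by linarith
  then show ?thesis
  proof cases
    case 1
    have "2 * sqrt R * D \<le> 2 * sqrt R * \<delta>"
      using 1 nonneg by (intro mult_left_mono) auto
    then have "w^2 \<le> 2 * sqrt R * \<delta>"
      using w_square_le by linarith
    then have "w powr p \<le> (2 * sqrt R * \<delta>) powr (p/2)"
      unfolding powr_eq_square_powr_half[OF nonneg(1)] using p by (intro powr_mono2) auto
    also have "\<dots> = (2*\<delta>) powr (p/2) * sqrt R powr (p/2)"
      using nonneg pos by (simp add: powr_mult mult_ac)
    also have "\<dots> = (2*\<delta>) powr (p/2) * R powr (p/4)"
      using nonneg by (simp add: powr_powr flip: powr_half_sqrt)
    also have "\<dots> \<le> (2*\<delta>) powr (p/2) * R powr (3/2)"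
      using nonneg p by (intro mult_left_mono powr_mono) auto
    finally show ?thesis using RK_nonneg D_nonneg unfolding distrib_right by linarith
  next
    case 2
    have "1 \<le> (D/\<delta>) powr \<theta>"
      using 2 pos by (intro ge_one_powr_ge_zero) auto
    have "w powr p \<le> (2*K) powr p"
      using w_le 2 nonneg p by (intro powr_mono2) auto
    also have "\<dots> \<le> (2*K) powr p * (D/\<delta>) powr \<theta>"
      using mult_left_mono[OF \<open>1 \<le> (D/\<delta>) powr \<theta>\<close> powr_ge_zero[of "2*K" p]] by simp
    also have "\<dots> = (2*K) powr p / \<delta> powr \<theta> * D powr \<theta>"
      using pos nonneg by (simp add: powr_divide)
    finally show ?thesis using RK_nonneg \<delta>_nonneg unfolding distrib_right by linarith
  next
    case 3
    have "w powr p \<le> (2*R) powr p"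
      using w_le nonneg p by (intro powr_mono2) auto
    also have "\<dots> = 2 powr p * R powr (p - 3/2) * R powr (3/2)"
      using nonneg by (simp add: powr_mult flip: powr_add)
    also have "\<dots> \<le> 2 powr p * K powr (p - 3/2) * R powr (3/2)"
      using 3 p pos powr_mono2'[of "p - 3/2" K R] by (intro mult_right_mono mult_left_mono) auto
    finally show ?thesis using \<delta>_nonneg D_nonneg unfolding distrib_right by linarith
  qed
qed

lemma norm_diff_powr_le_halfweight_defect:
  fixes p \<theta> \<eta> :: real
  assumes p: "0 < p" "p < 3/2" and \<theta>: "0 < \<theta>" and \<eta>: "0 < \<eta>"
  obtains c where "\<And>a b :: real^3. norm (a - b) powr p
    \<le> \<eta> * (1 + norm a powr (3/2) + norm b powr (3/2))
      + c * inner (halfweight a - halfweight b) (a - b) powr \<theta>"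
proof -
  define \<delta> where "\<delta> = (\<eta>/2) powr (2/p) / 2"
  define K where "K = (\<eta> / (2 * 2 powr p)) powr (1 / (p - 3/2))"
  have \<delta>: "0 < \<delta>" and K: "0 < K"
    using \<eta> by (simp_all add: \<delta>_def K_def)
  have coeff: "(2*\<delta>) powr (p/2) + 2 powr p * K powr (p - 3/2) = \<eta>"
    using p \<eta> by (simp add: \<delta>_def K_def powr_powr)
  show ?thesis
  proof (rule that)
    fix a b :: "real^3"
    define D where "D = inner (halfweight a - halfweight b) (a - b)"
    define R where "R = max 1 (max (norm a) (norm b))"
    have D: "0 \<le> D"
      unfolding D_def halfweight_eq by (rule inner_sqrt_scaled_diff_nonneg)
    have R: "1 \<le> R" "R powr (3/2) \<le> 1 + norm a powr (3/2) + norm b powr (3/2)"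
      by (auto simp: R_def max_def)
    have "norm (a - b) \<le> 2 * R"
      using norm_triangle_ineq4[of a b] by (simp add: R_def)
    moreover have "norm (a - b)^2 \<le> 2 * sqrt R * D"
    proof -
      have "sqrt (norm a) \<le> sqrt R" "sqrt (norm b) \<le> sqrt R"
        by (simp_all add: R_def)
      then have "sqrt (norm a) + sqrt (norm b) \<le> 2 * sqrt R"
        by linarith
      then have "(sqrt (norm a) + sqrt (norm b)) * D \<le> 2 * sqrt R * D"
        using D by (rule mult_right_mono)
      then show ?thesis
        using norm_diff_square_le_sqrt_scaled_inner[of a b] by (simp add: D_def halfweight_eq)
    qed
    ultimately have "norm (a - b) powr p \<le> \<eta> * R powr (3/2) + (2*K) powr p / \<delta> powr \<theta> * D powr \<theta>"
      using powr_le_split_by_size_and_defect[OF _ p(2) \<theta> \<delta> K norm_ge_zero R(1) D] p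
      by (simp add: coeff)
    also have "\<dots> \<le> \<eta> * (1 + norm a powr (3/2) + norm b powr (3/2)) + (2*K) powr p / \<delta> powr \<theta> * D powr \<theta>"
      using R \<eta> by simp
    finally show "norm (a - b) powr p
      \<le> \<eta> * (1 + norm a powr (3/2) + norm b powr (3/2))
        + (2*K) powr p / \<delta> powr \<theta> * inner (halfweight a - halfweight b) (a - b) powr \<theta>"
      by (simp add: D_def)
  qed
qed

lemma tendsto_zero_if_le_small_plus_multiple:
  fixes x y :: "nat \<Rightarrow> real" and B :: real
  assumes x_nonneg: "\<And>n. 0 \<le> x n" and y: "y \<longlonglongrightarrow> 0"
    and bound: "\<And>\<eta>. 0 < \<eta> \<Longrightarrow> \<exists>c. \<forall>n. x n \<le> \<eta> * B + c * y n"
  shows "x \<longlonglongrightarrow> 0"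
proof (rule order_tendstoI)
  fix a :: real
  assume "a < 0"
  then show "\<forall>\<^sub>F n in sequentially. a < x n"
    using x_nonneg by (intro always_eventually allI) (meson less_le_trans)
next
  fix a :: real
  assume "0 < a"
  define \<eta> where "\<eta> = a / (2 * (\<bar>B\<bar> + 1))"
  have "0 < \<eta>" and \<eta>B: "\<eta> * B \<le> a/2"
  proof -
    show "0 < \<eta>"
      using \<open>0 < a\<close> by (simp add: \<eta>_def)
    then have "\<eta> * B \<le> \<eta> * (\<bar>B\<bar> + 1)"
      by (intro mult_left_mono) auto
    also have "\<dots> = a/2"
      using abs_ge_zero[of B] by (simp add: \<eta>_def field_simps)
    finally show "\<eta> * B \<le> a/2" .
  qed
  then obtain c where c: "\<And>n. x n \<le> \<eta> * B + c * y n"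
    using bound by blast
  have "(\<lambda>n. c * y n) \<longlonglongrightarrow> 0"
    using tendsto_mult[OF tendsto_const y, of c] by simp
  then have "\<forall>\<^sub>F n in sequentially. c * y n < a/2"
    using \<open>0 < a\<close> by (intro order_tendstoD) auto
  moreover have "x n < a" if "c * y n < a/2" for n
    using c[of n] \<eta>B that by linarith
  ultimately show "\<forall>\<^sub>F n in sequentially. x n < a"
    by (rule eventually_mono)
qed

lemma set_integral_nonneg:
  fixes f :: "'a \<Rightarrow> real"
  assumes "\<And>x. x \<in> A \<Longrightarrow> 0 \<le> f x"
  shows "0 \<le> (LINT x:A|M. f x)"
  unfolding set_lebesgue_integral_def
  using assms by (intro Bochner_Integration.integral_nonneg) (simp add: indicator_def)

lemma set_integral_le_lincomb:
  fixes w u v :: "'a \<Rightarrow> real"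
  assumes E: "E \<in> sets M" and w: "w \<in> borel_measurable M"
    and u: "set_integrable M E u" and v: "set_integrable M E v"
    and w_nonneg: "\<And>x. 0 \<le> w x" and w_le: "\<And>x. w x \<le> a * u x + b * v x"
  shows "(LINT x:E|M. w x) \<le> a * (LINT x:E|M. u x) + b * (LINT x:E|M. v x)"
proof -
  have uv: "set_integrable M E (\<lambda>x. a * u x + b * v x)"
    using u v by auto
  have "set_borel_measurable M E w"
    unfolding set_borel_measurable_def using E w by measurable
  then have "set_integrable M E w"
    using w_nonneg w_le by (intro set_integrable_bound[OF uv]) (auto intro: order_trans[OF _ abs_ge_self])
  then have "(LINT x:E|M. w x) \<le> (LINT x:E|M. a * u x + b * v x)"
    using uv w_le by (rule set_integral_mono)
  also have "\<dots> = a * (LINT x:E|M. u x) + b * (LINT x:E|M. v x)"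
    using u v by (simp add: set_integral_add)
  finally show ?thesis .
qed

lemma set_integral_norm_diff_powr_le:
  fixes f g :: "'a \<Rightarrow> real^3"
  assumes E: "E \<in> sets M" "emeasure M E < \<infinity>"
    and f: "in_Lp_on M E (3/2) f" and g: "in_Lp_on M E (3/2) g"
    and defect_int: "set_integrable M E
      (\<lambda>x. inner (halfweight (f x) - halfweight (g x)) (f x - g x) powr \<theta>)"
    and pointwise: "\<And>a b :: real^3. norm (a - b) powr p
      \<le> \<eta> * (1 + norm a powr (3/2) + norm b powr (3/2))
        + c * inner (halfweight a - halfweight b) (a - b) powr \<theta>"
  shows "(LINT x:E|M. norm (f x - g x) powr p)
    \<le> \<eta> * (measure M E + (LINT x:E|M. norm (f x) powr (3/2)) + (LINT x:E|M. norm (g x) powr (3/2)))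
      + c * (LINT x:E|M. inner (halfweight (f x) - halfweight (g x)) (f x - g x) powr \<theta>)"
proof -
  have [measurable]: "f \<in> borel_measurable M" "g \<in> borel_measurable M"
    and f_int: "set_integrable M E (\<lambda>x. norm (f x) powr (3/2))"
    and g_int: "set_integrable M E (\<lambda>x. norm (g x) powr (3/2))"
    using f g by (simp_all add: in_Lp_on_def)
  have one_int: "set_integrable M E (\<lambda>_. 1::real)"
    using E by (simp add: set_integrable_def)
  have "(LINT x:E|M. norm (f x - g x) powr p)
      \<le> \<eta> * (LINT x:E|M. 1 + norm (f x) powr (3/2) + norm (g x) powr (3/2))
        + c * (LINT x:E|M. inner (halfweight (f x) - halfweight (g x)) (f x - g x) powr \<theta>)"
    using one_int f_int g_int
    by (intro set_integral_le_lincomb E(1) defect_int pointwise) auto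
  also have "(LINT x:E|M. 1 + norm (f x) powr (3/2) + norm (g x) powr (3/2))
      = measure M E + (LINT x:E|M. norm (f x) powr (3/2)) + (LINT x:E|M. norm (g x) powr (3/2))"
    using one_int f_int g_int E by (simp add: set_integral_add set_integral_const less_top)
  finally show ?thesis .
qed

theorem lemma8p2:
  fixes M :: "'a measure" and E :: "'a set"
    and Fs :: "nat \<Rightarrow> 'a \<Rightarrow> real ^ 3" and F :: "'a \<Rightarrow> real ^ 3" and \<theta> :: real
  assumes E_meas: "E \<in> sets M" and E_fin: "emeasure M E < \<infinity>"
    and Fs_Lp: "\<And>n. in_Lp_on M E (3/2) (Fs n)"
    and Fs_bdd: "\<exists>C. \<forall>n. (LINT x:E|M. norm (Fs n x) powr (3/2)) \<le> C"
    and F_Lp: "in_Lp_on M E (3/2) F"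
    and theta_pos: "\<theta> > 0"
    and G_L1: "\<And>n. set_integrable M E
        (\<lambda>x. (inner (halfweight (Fs n x) - halfweight (F x)) (Fs n x - F x)) powr \<theta>)"
    and G_lim: "(\<lambda>n. LINT x:E|M.
        \<bar>(inner (halfweight (Fs n x) - halfweight (F x)) (Fs n x - F x)) powr \<theta>\<bar>)
        \<longlonglongrightarrow> 0"
  shows "\<forall>p::real. 1 \<le> p \<and> p < 3/2 \<longrightarrow>
           (\<lambda>n. LINT x:E|M. norm (Fs n x - F x) powr p) \<longlonglongrightarrow> 0"
proof (intro allI impI)
  fix p :: real
  assume p: "1 \<le> p \<and> p < 3/2"
  obtain C where C: "\<And>n. (LINT x:E|M. norm (Fs n x) powr (3/2)) \<le> C"
    using Fs_bdd by auto
  show "(\<lambda>n. LINT x:E|M. norm (Fs n x - F x) powr p) \<longlonglongrightarrow> 0"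
  proof (rule tendsto_zero_if_le_small_plus_multiple)
    fix \<eta> :: real
    assume \<eta>: "0 < \<eta>"
    obtain c where c: "\<And>a b :: real^3. norm (a - b) powr p
        \<le> \<eta> * (1 + norm a powr (3/2) + norm b powr (3/2))
          + c * inner (halfweight a - halfweight b) (a - b) powr \<theta>"
      by (rule norm_diff_powr_le_halfweight_defect[OF _ _ theta_pos \<eta>]) (use p in auto)
    have "(LINT x:E|M. norm (Fs n x - F x) powr p)
        \<le> \<eta> * (measure M E + C + (LINT x:E|M. norm (F x) powr (3/2)))
          + c * (LINT x:E|M. inner (halfweight (Fs n x) - halfweight (F x)) (Fs n x - F x) powr \<theta>)"
      for n
    proof -
      have "\<eta> * (measure M E + (LINT x:E|M. norm (Fs n x) powr (3/2)) + (LINT x:E|M. norm (F x) powr (3/2)))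
          \<le> \<eta> * (measure M E + C + (LINT x:E|M. norm (F x) powr (3/2)))"
        using C[of n] \<eta> by (intro mult_left_mono) auto
      then show ?thesis
        using set_integral_norm_diff_powr_le[OF E_meas E_fin Fs_Lp F_Lp G_L1 c, of n] by linarith
    qed
    then show "\<exists>c. \<forall>n. (LINT x:E|M. norm (Fs n x - F x) powr p)
        \<le> \<eta> * (measure M E + C + (LINT x:E|M. norm (F x) powr (3/2)))
          + c * (LINT x:E|M. inner (halfweight (Fs n x) - halfweight (F x)) (Fs n x - F x) powr \<theta>)"
      by blast
  qed (use G_lim in \<open>simp_all add: set_integral_nonneg\<close>)
qed

end
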